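(* Consider the discrete-time system $$\begin{bmatrix}\mathbf{x}^1_{t+1}\\ \mathbf{x}^2_{t+1}\end{bmatrix}=\begin{bmatrix}\mathbf{A}_{11}&\mathbf{A}_{12}\\ \mathbf{A}_{21}&\mathbf{A}_{22}\end{bmatrix}\begin{bmatrix}\mathbf{x}^1_{t}\\ \mathbf{x}^2_{t}\end{bmatrix}+\mathbf{B}\mathbf{u}_t+\mathbf{w}_t,$$ with $\mathbf{x}^1_t\in\mathbb{R}^n$, $\mathbf{x}^2_t\in\mathbb{R}^m$, state $\mathbf{x}_t=[(\mathbf{x}^1_t)^{\mathrm T},(\mathbf{x}^2_t)^{\mathrm T}]^{\mathrm T}$, and $\mathbf{w}_t\sim\mathcal N(\mathbf 0,\mathrm{diag}(\mathbf W_{11},\mathbf W_{22}))$ i.i.d. with $\mathbf W_{11},\mathbf W_{22}\succ0$. An encoder observes the full state and at each time $t$ emits a binary codeword $\mathbf a_t\in\{0,1\}^*$ according to an arbitrary (possibly randomized) causal policy $\mathbb P(\mathbf a_t\mid \mathbf x_{1:t},\mathbf a_{1:t-1})$; at each $t$ the set $\mathcal A_t=\{\mathsf a\in\{0,1\}^*:\mathbb P(\mathbf a_t=\mathsf a)>0\}$ is prefix-free (no element is a prefix of a different element). A decoder/controller observes $\mathbf a_{1:t}$ and the side information $\mathbf x^2_{1:t}$ and chooses $\mathbf u_t$ according to an arbitrary (possibly randomized) causal policy $\mathbb P(\mathbf u_t\mid \mathbf a_{1:t},\mathbf x^2_{1:t},\mathbf u_{1:t-1})$. Let $\ell(\mathbf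 a_t)$ denote the length in bits of $\mathbf a_t$. Then for every $T\ge1$, and for any such encoder and decoder/controller policies, $$\sum_{t=1}^{T}\mathbb E[\ell(\mathbf a_t)]\ \ge\ I(\mathbf x_{1:T}\rightarrow\mathbf a_{1:T}\,\|\,\mathbf x^2_{1:T}).$$
   Context: The causally conditioned directed information is defined by $I(\mathbf p_{1:T}\rightarrow\mathbf q_{1:T}\,\|\,\mathbf r_{1:T})=\sum_{t=1}^T I(\mathbf p_{1:t};\mathbf q_t\mid \mathbf q_{1:t-1},\mathbf r_{1:t})$, where $I$ denotes (conditional) mutual information. $\mathbf u_t\in\mathbb R^{u}$, $\mathbf B\in\mathbb R^{(n+m)\times u}$, $(\mathbf A,\mathbf B)$ stabilizable. All probabilities and expectations are with respect to the joint law induced by the plant dynamics and the policies. *)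

theory Defs
  imports "HOL-Probability.Probability" "HOL-Library.Sublist"
begin

definition hist :: "(nat \<Rightarrow> 'w \<Rightarrow> 'b) \<Rightarrow> nat set \<Rightarrow> 'w \<Rightarrow> (nat \<Rightarrow> 'b)" where
  "hist p I = (\<lambda>\<omega>. restrict (\<lambda>i. p i \<omega>) I)"

definition sigma_of :: "'w measure \<Rightarrow> ('w \<Rightarrow> 'b) \<Rightarrow> 'b measure \<Rightarrow> 'w measure" where
  "sigma_of M X N = vimage_algebra (space M) X N"

definition cprob :: "'w measure \<Rightarrow> 'w measure \<Rightarrow> ('w \<Rightarrow> 'c) \<Rightarrow> 'c \<Rightarrow> 'w \<Rightarrow> real" where
  "cprob M F Y y = (\<lambda>\<omega>. enn2real (nn_cond_exp M F (indicator {\<omega>\<in>space M. Y \<omega> = y}) \<omega>))"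

definition kl_term :: "real \<Rightarrow> real \<Rightarrow> ereal" where
  "kl_term p q = (if p = 0 then 0 else if q = 0 then \<infinity> else ereal (p * log 2 (p / q)))"

definition disc_KL :: "('c::countable \<Rightarrow> real) \<Rightarrow> ('c \<Rightarrow> real) \<Rightarrow> ereal" where
  "disc_KL p q =
     enn2ereal (\<integral>\<^sup>+ y. e2ennreal (kl_term (p y) (q y)) \<partial>count_space UNIV)
   - enn2ereal (\<integral>\<^sup>+ y. e2ennreal (- kl_term (p y) (q y)) \<partial>count_space UNIV)"

text \<open>Conditional mutual information I(X; Y | Z) (in bits) for a discrete (countably valued) Y and
  arbitrary X, Z: the expected KL divergence between the conditional law of Y given (X,Z)
  and the conditional law of Y given Z.\<close>
definition cond_mi ::
  "'w measure \<Rightarrow> ('w \<Rightarrow> 'x) \<Rightarrow> 'x measure \<Rightarrow> ('w \<Rightarrow> 'c::countable) \<Rightarrow> ('w \<Rightarrow> 'z) \<Rightarrow> 'z measure \<Rightarrow> ennreal"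
  where
  "cond_mi M X MX Y Z MZ =
     (\<integral>\<^sup>+ \<omega>. e2ennreal (disc_KL
          (\<lambda>y. cprob M (sigma_of M (\<lambda>\<omega>. (X \<omega>, Z \<omega>)) (MX \<Otimes>\<^sub>M MZ)) Y y \<omega>)
          (\<lambda>y. cprob M (sigma_of M Z MZ) Y y \<omega>)) \<partial>M)"

text \<open>Causally conditioned directed information
  I(p_{1:T} -> q_{1:T} || r_{1:T}) = sum_{t=1}^T I(p_{1:t}; q_t | q_{1:t-1}, r_{1:t}),
  for a discrete process q.\<close>
definition dir_info_cc ::
  "'w measure \<Rightarrow> (nat \<Rightarrow> 'w \<Rightarrow> 'p) \<Rightarrow> 'p measure \<Rightarrow> (nat \<Rightarrow> 'w \<Rightarrow> 'c::countable)
    \<Rightarrow> (nat \<Rightarrow> 'w \<Rightarrow> 'r) \<Rightarrow> 'r measure \<Rightarrow> nat \<Rightarrow> ennreal" where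
  "dir_info_cc M p Mp q r Mr T =
     (\<Sum>t\<in>{1..T}. cond_mi M (hist p {1..t}) (PiM {1..t} (\<lambda>_. Mp)) (q t)
        (\<lambda>\<omega>. (hist q {1..<t} \<omega>, hist r {1..t} \<omega>))
        (PiM {1..<t} (\<lambda>_. count_space UNIV) \<Otimes>\<^sub>M PiM {1..t} (\<lambda>_. Mr)))"

definition cond_indep ::
  "'w measure \<Rightarrow> ('w \<Rightarrow> 'x) \<Rightarrow> 'x measure \<Rightarrow> ('w \<Rightarrow> 'y) \<Rightarrow> 'y measure \<Rightarrow> ('w \<Rightarrow> 'z) \<Rightarrow> 'z measure \<Rightarrow> bool"
  where
  "cond_indep M X MX Y MY Z MZ \<longleftrightarrow>
     (\<forall>A\<in>sets MX. \<forall>B\<in>sets MY. AE \<omega> in M.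
        nn_cond_exp M (sigma_of M Z MZ) (indicator {\<omega>\<in>space M. X \<omega> \<in> A \<and> Y \<omega> \<in> B}) \<omega>
      = nn_cond_exp M (sigma_of M Z MZ) (indicator {\<omega>\<in>space M. X \<omega> \<in> A}) \<omega>
        * nn_cond_exp M (sigma_of M Z MZ) (indicator {\<omega>\<in>space M. Y \<omega> \<in> B}) \<omega>)"

text \<open>Independence of two random variables with possibly different value types
  (the library's indep_var requires equal types).\<close>
definition indep_rv ::
  "'w measure \<Rightarrow> ('w \<Rightarrow> 'x) \<Rightarrow> 'x measure \<Rightarrow> ('w \<Rightarrow> 'y) \<Rightarrow> 'y measure \<Rightarrow> bool" where
  "indep_rv M X MX Y MY \<longleftrightarrow>
     (\<forall>A\<in>sets MX. \<forall>B\<in>sets MY.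
        measure M {\<omega>\<in>space M. X \<omega> \<in> A \<and> Y \<omega> \<in> B}
      = measure M {\<omega>\<in>space M. X \<omega> \<in> A} * measure M {\<omega>\<in>space M. Y \<omega> \<in> B})"

definition pos_def_mat :: "real^'n^'n \<Rightarrow> bool" where
  "pos_def_mat S \<longleftrightarrow> transpose S = S \<and> (\<forall>z. z \<noteq> 0 \<longrightarrow> 0 < z \<bullet> (S *v z))"

definition gauss_dens :: "real^'n^'n \<Rightarrow> real^'n \<Rightarrow> real" where
  "gauss_dens S z = exp (- (z \<bullet> (matrix_inv S *v z)) / 2) / sqrt ((2 * pi) ^ CARD('n) * det S)"

definition blockA :: "real^'n^'n \<Rightarrow> real^'m^'n \<Rightarrow> real^'n^'m \<Rightarrow> real^'m^'m
    \<Rightarrow> ((real^'n) \<times> (real^'m)) \<Rightarrow> ((real^'n) \<times> (real^'m))" where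
  "blockA A11 A12 A21 A22 = (\<lambda>(z1, z2). (A11 *v z1 + A12 *v z2, A21 *v z1 + A22 *v z2))"

definition blockB :: "real^'k^'n \<Rightarrow> real^'k^'m \<Rightarrow> real^'k \<Rightarrow> ((real^'n) \<times> (real^'m))" where
  "blockB B1 B2 = (\<lambda>v. (B1 *v v, B2 *v v))"

definition stabilizable :: "('s::real_normed_vector \<Rightarrow> 's) \<Rightarrow> ('i::real_normed_vector \<Rightarrow> 's) \<Rightarrow> bool" where
  "stabilizable A B \<longleftrightarrow> (\<exists>K. linear K \<and>
      (\<forall>z. (\<lambda>k. ((\<lambda>y. A y + B (K y)) ^^ k) z) \<longlonglongrightarrow> 0))"

definition prefix_free :: "bool list set \<Rightarrow> bool" where
  "prefix_free S \<longleftrightarrow> (\<forall>s\<in>S. \<forall>s'\<in>S. prefix s s' \<longrightarrow> s = s')"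

end

theory Submission
  imports Defs
begin

(* The bound holds summand by summand: the conditional mutual information between the state
   history and a prefix-free codeword never exceeds the codeword's expected length, whatever the
   dynamics, noise and policies.
   For a codeword y of length l with conditional probabilities p given (X, Z) and q given Z,
   ln u <= u - 1 at u = 2^-l / q gives  p log2 (p / q) <= l p + (p 2^-l / q - p) / ln 2.
   As q is Z-measurable, the tower property turns the mean of p 2^-l / q into at most 2^-l,
   so summing over y yields  I(X; Y | Z) <= E l(Y) + (sum_y 2^-l(y) - 1) / ln 2,
   and Kraft's inequality makes the last term nonpositive. *)

lemma prefix_free_subset: "prefix_free S \<Longrightarrow> T \<subseteq> S \<Longrightarrow> prefix_free T"
  unfolding prefix_free_def by blast

lemma prefix_free_tails: "prefix_free S \<Longrightarrow> prefix_free {s. b # s \<in> S}"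
  unfolding prefix_free_def by (metis (mono_tags) Cons_prefix_Cons list.inject mem_Collect_eq)

lemma Cons_True_False_split:
  fixes S :: "bool list set"
  assumes "[] \<notin> S"
  shows "S = Cons True ` {s. True # s \<in> S} \<union> Cons False ` {s. False # s \<in> S}"
proof (intro equalityI subsetI)
  fix s assume "s \<in> S"
  with assms obtain b t where "s = b # t"
    by (cases s) auto
  with \<open>s \<in> S\<close> show "s \<in> Cons True ` {s. True # s \<in> S} \<union> Cons False ` {s. False # s \<in> S}"
    by (cases b) auto
qed auto

lemma kraft_inequality_bounded_length:
  fixes S :: "bool list set"
  assumes "prefix_free S" and "\<And>s. s \<in> S \<Longrightarrow> length s \<le> n"
  shows "(\<Sum>s\<in>S. (1/2::real) ^ length s) \<le> 1"
  using assms
proof (induction n arbitrary: S)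
  case 0
  then have "S = {} \<or> S = {[]}"
    by auto
  then show ?case
    by auto
next
  case (Suc n S)
  show ?case
  proof (cases "[] \<in> S")
    case True
    with Suc.prems(1) have "S = {[]}" unfolding prefix_free_def by fastforce
    then show ?thesis by simp
  next
    case False
    define tails where "tails b = {s. b # s \<in> S}" for b
    have tails_pf: "prefix_free (tails b)" for b
      unfolding tails_def by (rule prefix_free_tails[OF Suc.prems(1)])
    have tails_len: "length s \<le> n" if "s \<in> tails b" for s b
      using Suc.prems(2)[of "b # s"] that by (simp add: tails_def)
    have tails_fin: "finite (tails b)" for b
      by (rule finite_subset[OF _ finite_lists_length_le[of UNIV n]]) (auto dest: tails_len)
    have S_split: "S = Cons True ` tails True \<union> Cons False ` tails False"
      unfolding tails_def using False by (rule Cons_True_False_split)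
    have "(\<Sum>s\<in>S. (1/2::real) ^ length s)
        = (\<Sum>s\<in>Cons True ` tails True. (1/2) ^ length s) + (\<Sum>s\<in>Cons False ` tails False. (1/2) ^ length s)"
      unfolding S_split by (rule sum.union_disjoint) (auto simp: tails_fin)
    also have "\<dots> = (\<Sum>s\<in>tails True. (1/2) ^ Suc (length s)) + (\<Sum>s\<in>tails False. (1/2) ^ Suc (length s))"
      by (simp add: sum.reindex)
    also have "\<dots> = (1/2) * (\<Sum>s\<in>tails True. (1/2) ^ length s) + (1/2) * (\<Sum>s\<in>tails False. (1/2) ^ length s)"
      by (simp add: sum_distrib_left)
    also have "\<dots> \<le> (1/2) * 1 + (1/2) * 1"
      using Suc.IH tails_pf tails_len by (intro add_mono mult_left_mono) auto
    finally show ?thesis by simp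
  qed
qed

lemma kraft_inequality:
  assumes "prefix_free S"
  shows "(\<integral>\<^sup>+s. ennreal ((1/2) ^ length s) * indicator S s \<partial>count_space UNIV) \<le> 1"
proof -
  define f where "f n s = ennreal ((1/2) ^ length s) * indicator (S \<inter> {s. length s \<le> n}) s" for n s
  have "incseq f"
    by (auto simp: f_def incseq_def le_fun_def split: split_indicator)
  have sup: "(\<lambda>s. ennreal ((1/2) ^ length s) * indicator S s) = (\<lambda>s. SUP n. f n s)"
  proof
    fix s
    have "(SUP n. f n s) = f (length s) s"
      by (intro antisym SUP_least SUP_upper) (auto simp: f_def split: split_indicator)
    then show "ennreal ((1/2) ^ length s) * indicator S s = (SUP n. f n s)"
      by (simp add: f_def split: split_indicator)
  qed
  have bound: "(\<integral>\<^sup>+s. f n s \<partial>count_space UNIV) \<le> 1" for n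
  proof -
    have fin: "finite (S \<inter> {s. length s \<le> n})"
      using finite_lists_length_le[of "UNIV :: bool set" n] by (intro finite_Int disjI2) simp
    have "(\<integral>\<^sup>+s. f n s \<partial>count_space UNIV) = ennreal (\<Sum>s\<in>S \<inter> {s. length s \<le> n}. (1/2) ^ length s)"
      unfolding f_def using fin
      by (simp add: nn_integral_count_space_indicator[symmetric] nn_integral_count_space_finite sum_ennreal)
    also have "\<dots> \<le> 1"
    proof -
      have "(\<Sum>s\<in>S \<inter> {s. length s \<le> n}. (1/2::real) ^ length s) \<le> 1"
        by (rule kraft_inequality_bounded_length) (auto intro: prefix_free_subset[OF assms])
      then show ?thesis
        by simp
    qed
    finally show ?thesis .
  qed
  have "(\<integral>\<^sup>+s. (SUP n. f n s) \<partial>count_space UNIV) = (SUP n. \<integral>\<^sup>+s. f n s \<partial>count_space UNIV)"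
    by (rule nn_integral_monotone_convergence_SUP[OF \<open>incseq f\<close>]) simp
  also have "\<dots> \<le> 1"
    by (rule SUP_least) (rule bound)
  finally show ?thesis
    unfolding sup .
qed

lemma minus_log2_le:
  fixes q :: real and l :: nat
  assumes "0 < q"
  shows "- log 2 q \<le> real l + ((1/2) ^ l / q - 1) / ln 2"
proof -
  have "ln ((1/2) ^ l / q) = - (real l * ln 2) - ln q"
    using assms by (simp add: ln_div ln_realpow)
  moreover have "ln ((1/2) ^ l / q) \<le> (1/2) ^ l / q - 1"
    using assms by (intro ln_le_minus_one) simp
  ultimately have "- ln q \<le> real l * ln 2 + ((1/2) ^ l / q - 1)"
    by linarith
  then have "- ln q / ln 2 \<le> real l + ((1/2) ^ l / q - 1) / ln 2"
    by (simp add: divide_right_mono field_simps)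
  then show ?thesis
    by (simp add: log_def)
qed

lemma max_p_log2_ratio_le:
  fixes p q :: real and l :: nat
  assumes p: "0 < p" "p \<le> 1" and q: "0 < q" "q \<le> 1"
  shows "max 0 (p * log 2 (p / q)) + (1 / ln 2) * p \<le> real l * p + (1 / ln 2) * (p * ((1/2) ^ l / q))"
proof -
  have "p * log 2 (p / q) \<le> p * (- log 2 q)"
    using p q by (intro mult_left_mono) (auto simp: log_divide)
  moreover have "0 \<le> p * (- log 2 q)"
    using p q by (simp add: mult_nonneg_nonpos)
  moreover have "p * (- log 2 q) \<le> p * (real l + ((1/2) ^ l / q - 1) / ln 2)"
    using p q by (intro mult_left_mono minus_log2_le) auto
  ultimately have "max 0 (p * log 2 (p / q)) \<le> p * (real l + ((1/2) ^ l / q - 1) / ln 2)"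
    by simp
  also have "\<dots> = real l * p + (1 / ln 2) * (p * ((1/2) ^ l / q)) - (1 / ln 2) * p"
    by (simp add: field_simps)
  finally show ?thesis
    by linarith
qed

(* The term p / ln 2 stands on the left so that the bound needs no subtraction in ennreal. *)
lemma kl_term_le_codeword_length:
  fixes p q :: real and l :: nat
  assumes "0 \<le> p" "p \<le> 1" "0 \<le> q" "q \<le> 1"
  shows "e2ennreal (kl_term p q) + ennreal (1 / ln 2) * ennreal p
     \<le> of_nat l * ennreal p + ennreal (1 / ln 2) * (ennreal p * (ennreal ((1/2) ^ l) / ennreal q))"
proof (cases "p = 0 \<or> q = 0")
  case True
  then show ?thesis
    using assms by (auto simp: kl_term_def divide_ennreal_def ennreal_mult_top)
next
  case False
  with assms have p: "0 < p" "p \<le> 1" and q: "0 < q" "q \<le> 1" by auto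
  have kl: "e2ennreal (kl_term p q) = ennreal (max 0 (p * log 2 (p / q)))"
    using False by (simp add: kl_term_def)
  have c: "ennreal (1 / ln 2) * ennreal p = ennreal ((1 / ln 2) * p)"
    by (rule ennreal_mult[symmetric]) (use p in auto)
  have "e2ennreal (kl_term p q) + ennreal (1 / ln 2) * ennreal p
      = ennreal (max 0 (p * log 2 (p / q)) + (1 / ln 2) * p)"
    unfolding kl c using p by (intro ennreal_plus[symmetric]) auto
  also have "\<dots> \<le> ennreal (real l * p + (1 / ln 2) * (p * ((1/2) ^ l / q)))"
    using p q by (intro ennreal_leI max_p_log2_ratio_le)
  also have "\<dots> = of_nat l * ennreal p + ennreal (1 / ln 2) * (ennreal p * (ennreal ((1/2) ^ l) / ennreal q))"
  proof -
    have "0 \<le> real l * p" "0 \<le> (1 / ln 2) * (p * ((1/2) ^ l / q))" "0 \<le> 1 / ln (2::real)"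
      "0 \<le> p * ((1/2) ^ l / q)" "0 \<le> (1/2::real) ^ l / q" "0 \<le> (1/2::real) ^ l" "0 \<le> p" "0 \<le> real l"
      using p q by auto
    then show ?thesis
      using \<open>0 < q\<close> by (simp only: ennreal_plus ennreal_mult divide_ennreal ennreal_of_nat_eq_real_of_nat)
  qed
  finally show ?thesis .
qed

lemma e2ennreal_disc_KL_le:
  "e2ennreal (disc_KL p q) \<le> (\<integral>\<^sup>+y. e2ennreal (kl_term (p y) (q y)) \<partial>count_space UNIV)"
  unfolding disc_KL_def by (intro order_trans[OF e2ennreal_mono[OF ereal_diff_le_self]]) auto

lemma borel_measurable_kl_term[measurable (raw)]:
  assumes [measurable]: "f \<in> borel_measurable M" "g \<in> borel_measurable M"
  shows "(\<lambda>\<omega>. kl_term (f \<omega>) (g \<omega>)) \<in> borel_measurable M"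
  unfolding kl_term_def log_def by measurable

lemma nn_integral_count_space_emeasure_eq:
  fixes Y :: "'w \<Rightarrow> 'c::countable"
  assumes [measurable]: "Y \<in> measurable M (count_space UNIV)"
  shows "(\<integral>\<^sup>+y. f y * emeasure M {\<omega>\<in>space M. Y \<omega> = y} \<partial>count_space UNIV) = (\<integral>\<^sup>+\<omega>. f (Y \<omega>) \<partial>M)"
proof -
  have "(\<integral>\<^sup>+y. f y * emeasure M {\<omega>\<in>space M. Y \<omega> = y} \<partial>count_space UNIV)
      = (\<integral>\<^sup>+y. \<integral>\<^sup>+\<omega>. f y * indicator {\<omega>\<in>space M. Y \<omega> = y} \<omega> \<partial>M \<partial>count_space UNIV)"
    by (simp add: nn_integral_cmult)
  also have "\<dots> = (\<integral>\<^sup>+\<omega>. \<integral>\<^sup>+y. f y * indicator {\<omega>\<in>space M. Y \<omega> = y} \<omega> \<partial>count_space UNIV \<partial>M)"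
    by (rule nn_integral_count_space_nn_integral[symmetric]) auto
  also have "\<dots> = (\<integral>\<^sup>+\<omega>. \<integral>\<^sup>+y. f y * indicator {Y \<omega>} y \<partial>count_space UNIV \<partial>M)"
    by (intro nn_integral_cong) (auto split: split_indicator)
  also have "\<dots> = (\<integral>\<^sup>+\<omega>. f (Y \<omega>) \<partial>M)"
    by (simp add: nn_integral_indicator_singleton)
  finally show ?thesis .
qed

lemma subalgebra_sigma_of:
  assumes "X \<in> measurable M N"
  shows "subalgebra M (sigma_of M X N)"
  unfolding subalgebra_def sigma_of_def using sets_image_in_sets[OF refl assms] by auto

lemma subalgebra_sigma_of_Pair_snd:
  assumes "X \<in> measurable M MX" "Z \<in> measurable M MZ"
  shows "subalgebra (sigma_of M (\<lambda>\<omega>. (X \<omega>, Z \<omega>)) (MX \<Otimes>\<^sub>M MZ)) (sigma_of M Z MZ)"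
proof -
  let ?F = "sigma_of M (\<lambda>\<omega>. (X \<omega>, Z \<omega>)) (MX \<Otimes>\<^sub>M MZ)"
  have XZ: "(\<lambda>\<omega>. (X \<omega>, Z \<omega>)) \<in> measurable M (MX \<Otimes>\<^sub>M MZ)"
    using assms by measurable
  have "(\<lambda>\<omega>. (X \<omega>, Z \<omega>)) \<in> measurable ?F (MX \<Otimes>\<^sub>M MZ)"
    unfolding sigma_of_def
    by (rule measurable_vimage_algebra1) (use measurable_space[OF XZ] in blast)
  then have "Z \<in> measurable ?F MZ"
    using measurable_compose[OF _ measurable_snd] by fastforce
  then show ?thesis
    using sets_image_in_sets[of ?F "space M"] by (auto simp: subalgebra_def sigma_of_def)
qed

lemma borel_measurable_cprob[measurable]: "cprob M F Y y \<in> borel_measurable F"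
  unfolding cprob_def by measurable

lemma cprob_nonneg[simp]: "0 \<le> cprob M F Y y \<omega>"
  by (simp add: cprob_def)

context prob_space
begin

lemma finite_measure_subalgebra_of_subalgebra:
  "subalgebra M F \<Longrightarrow> finite_measure_subalgebra M F"
  by (simp add: finite_measure_subalgebra_def finite_measure_subalgebra_axioms_def finite_measure_axioms)

lemma AE_cprob:
  assumes "subalgebra M F" and [measurable]: "{\<omega>\<in>space M. Y \<omega> = y} \<in> events"
  shows "AE \<omega> in M. ennreal (cprob M F Y y \<omega>) = nn_cond_exp M F (indicator {\<omega>\<in>space M. Y \<omega> = y}) \<omega>
    \<and> cprob M F Y y \<omega> \<le> 1"
proof -
  interpret F: finite_measure_subalgebra M F
    using assms(1) by (rule finite_measure_subalgebra_of_subalgebra)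
  have "AE \<omega> in M. nn_cond_exp M F (indicator {\<omega>\<in>space M. Y \<omega> = y}) \<omega> \<le> nn_cond_exp M F (\<lambda>_. 1) \<omega>"
    by (rule F.nn_cond_exp_mono) (simp_all add: indicator_def)
  moreover have "AE \<omega> in M. nn_cond_exp M F (\<lambda>_. 1) \<omega> = 1"
  proof -
    have "AE \<omega> in M. 1 = nn_cond_exp M F (\<lambda>_. 1) \<omega>"
      by (rule F.nn_cond_exp_F_meas) simp
    then show ?thesis
      by eventually_elim (rule sym)
  qed
  ultimately show ?thesis
  proof eventually_elim
    case (elim \<omega>)
    then have le1: "nn_cond_exp M F (indicator {\<omega>\<in>space M. Y \<omega> = y}) \<omega> \<le> 1"
      by simp
    then have "nn_cond_exp M F (indicator {\<omega>\<in>space M. Y \<omega> = y}) \<omega> < \<top>"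
      by (metis ennreal_one_less_top le_less_trans)
    moreover have "enn2real (nn_cond_exp M F (indicator {\<omega>\<in>space M. Y \<omega> = y}) \<omega>) \<le> 1"
      using le1 by (intro enn2real_leI) simp_all
    ultimately show ?case
      unfolding cprob_def by simp
  qed
qed

lemma nn_integral_mult_cprob:
  assumes "subalgebra M F" and [measurable]: "{\<omega>\<in>space M. Y \<omega> = y} \<in> events" "g \<in> borel_measurable F"
  shows "(\<integral>\<^sup>+\<omega>. g \<omega> * ennreal (cprob M F Y y \<omega>) \<partial>M) = (\<integral>\<^sup>+\<omega>. g \<omega> * indicator {\<omega>\<in>space M. Y \<omega> = y} \<omega> \<partial>M)"
proof -
  interpret F: finite_measure_subalgebra M F
    using assms(1) by (rule finite_measure_subalgebra_of_subalgebra)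
  have "(\<integral>\<^sup>+\<omega>. g \<omega> * ennreal (cprob M F Y y \<omega>) \<partial>M)
      = (\<integral>\<^sup>+\<omega>. g \<omega> * nn_cond_exp M F (indicator {\<omega>\<in>space M. Y \<omega> = y}) \<omega> \<partial>M)"
    by (rule nn_integral_cong_AE) (use AE_cprob[OF assms(1,2)] in auto)
  also have "\<dots> = (\<integral>\<^sup>+\<omega>. g \<omega> * indicator {\<omega>\<in>space M. Y \<omega> = y} \<omega> \<partial>M)"
    by (rule F.nn_cond_exp_intg) auto
  finally show ?thesis .
qed

lemma nn_integral_cprob:
  assumes "subalgebra M F" "{\<omega>\<in>space M. Y \<omega> = y} \<in> events"
  shows "(\<integral>\<^sup>+\<omega>. ennreal (cprob M F Y y \<omega>) \<partial>M) = emeasure M {\<omega>\<in>space M. Y \<omega> = y}"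
  using nn_integral_mult_cprob[OF assms, of "\<lambda>_. 1"] assms(2) by simp

lemma nn_integral_divide_cprob_mult_cprob_le:
  assumes G: "subalgebra M G" and Y_y[measurable]: "{\<omega>\<in>space M. Y \<omega> = y} \<in> events"
  shows "(\<integral>\<^sup>+\<omega>. c / ennreal (cprob M G Y y \<omega>) * ennreal (cprob M G Y y \<omega>) \<partial>M)
    \<le> c * indicator {s. prob {\<omega>\<in>space M. Y \<omega> = s} > 0} y"
proof (cases "prob {\<omega>\<in>space M. Y \<omega> = y} > 0")
  case True
  have "c / e * e \<le> c" if "e < \<top>" for e :: ennreal
    using that by (cases "e = 0") (simp_all add: ennreal_divide_times)
  then have "(\<integral>\<^sup>+\<omega>. c / ennreal (cprob M G Y y \<omega>) * ennreal (cprob M G Y y \<omega>) \<partial>M) \<le> (\<integral>\<^sup>+\<omega>. c \<partial>M)"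
    by (intro nn_integral_mono) simp
  with True show ?thesis
    by (simp add: emeasure_space_1)
next
  case False
  then have "(\<integral>\<^sup>+\<omega>. ennreal (cprob M G Y y \<omega>) \<partial>M) = 0"
    using measure_nonneg[of M "{\<omega>\<in>space M. Y \<omega> = y}"]
    by (simp add: nn_integral_cprob G emeasure_eq_measure)
  then have "AE \<omega> in M. ennreal (cprob M G Y y \<omega>) = 0"
    using nn_integral_0_iff_AE[of "\<lambda>\<omega>. ennreal (cprob M G Y y \<omega>)" M]
      measurable_from_subalg[OF G borel_measurable_cprob[of M G Y y]]
    by simp
  then have "(\<integral>\<^sup>+\<omega>. c / ennreal (cprob M G Y y \<omega>) * ennreal (cprob M G Y y \<omega>) \<partial>M) = (\<integral>\<^sup>+\<omega>. 0 \<partial>M)"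
    by (intro nn_integral_cong_AE) (auto elim: AE_mp)
  with False show ?thesis
    by simp
qed

lemma nn_integral_cprob_mult_ratio_le:
  assumes F: "subalgebra M F" and G: "subalgebra F G"
    and Y_y[measurable]: "{\<omega>\<in>space M. Y \<omega> = y} \<in> events"
  shows "(\<integral>\<^sup>+\<omega>. ennreal (cprob M F Y y \<omega>) * (c / ennreal (cprob M G Y y \<omega>)) \<partial>M)
    \<le> c * indicator {s. prob {\<omega>\<in>space M. Y \<omega> = s} > 0} y"
proof -
  define g where "g \<omega> = c / ennreal (cprob M G Y y \<omega>)" for \<omega>
  have G': "subalgebra M G"
    using F G by (auto simp: subalgebra_def)
  have g_G: "g \<in> borel_measurable G"
    unfolding g_def by measurable
  then have g_F: "g \<in> borel_measurable F"
    by (rule measurable_from_subalg[OF G])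
  have "(\<integral>\<^sup>+\<omega>. ennreal (cprob M F Y y \<omega>) * g \<omega> \<partial>M) = (\<integral>\<^sup>+\<omega>. g \<omega> * ennreal (cprob M F Y y \<omega>) \<partial>M)"
    by (simp add: mult.commute)
  also have "\<dots> = (\<integral>\<^sup>+\<omega>. g \<omega> * indicator {\<omega>\<in>space M. Y \<omega> = y} \<omega> \<partial>M)"
    by (rule nn_integral_mult_cprob[OF F Y_y g_F])
  also have "\<dots> = (\<integral>\<^sup>+\<omega>. g \<omega> * ennreal (cprob M G Y y \<omega>) \<partial>M)"
    by (rule nn_integral_mult_cprob[OF G' Y_y g_G, symmetric])
  also have "\<dots> \<le> c * indicator {s. prob {\<omega>\<in>space M. Y \<omega> = s} > 0} y"
    unfolding g_def by (rule nn_integral_divide_cprob_mult_cprob_le[OF G' Y_y])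
  finally show ?thesis
    by (simp add: g_def)
qed

lemma nn_integral_kl_term_cprob_le:
  assumes F: "subalgebra M F" and G: "subalgebra F G"
    and Y_y[measurable]: "{\<omega>\<in>space M. Y \<omega> = y} \<in> events"
  shows "(\<integral>\<^sup>+\<omega>. e2ennreal (kl_term (cprob M F Y y \<omega>) (cprob M G Y y \<omega>)) \<partial>M)
      + ennreal (1 / ln 2) * emeasure M {\<omega>\<in>space M. Y \<omega> = y}
    \<le> of_nat l * emeasure M {\<omega>\<in>space M. Y \<omega> = y}
      + ennreal (1 / ln 2) * (ennreal ((1/2) ^ l) * indicator {s. prob {\<omega>\<in>space M. Y \<omega> = s} > 0} y)"
proof -
  let ?p = "\<lambda>\<omega>. cprob M F Y y \<omega>" and ?q = "\<lambda>\<omega>. cprob M G Y y \<omega>"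
  let ?c = "ennreal (1 / ln 2)" and ?r = "\<lambda>\<omega>. ennreal ((1/2) ^ l) / ennreal (cprob M G Y y \<omega>)"
  have G': "subalgebra M G"
    using F G by (auto simp: subalgebra_def)
  have [measurable]: "?p \<in> borel_measurable M" "?q \<in> borel_measurable M"
    using measurable_from_subalg[OF F borel_measurable_cprob[of M F Y y]]
      measurable_from_subalg[OF G' borel_measurable_cprob[of M G Y y]]
    by simp_all
  have "(\<integral>\<^sup>+\<omega>. e2ennreal (kl_term (?p \<omega>) (?q \<omega>)) \<partial>M) + ?c * emeasure M {\<omega>\<in>space M. Y \<omega> = y}
      = (\<integral>\<^sup>+\<omega>. e2ennreal (kl_term (?p \<omega>) (?q \<omega>)) + ?c * ennreal (?p \<omega>) \<partial>M)"
    by (simp add: nn_integral_add nn_integral_cmult nn_integral_cprob F)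
  also have "\<dots> \<le> (\<integral>\<^sup>+\<omega>. of_nat l * ennreal (?p \<omega>) + ?c * (ennreal (?p \<omega>) * ?r \<omega>) \<partial>M)"
  proof (rule nn_integral_mono_AE)
    show "AE \<omega> in M. e2ennreal (kl_term (?p \<omega>) (?q \<omega>)) + ?c * ennreal (?p \<omega>)
        \<le> of_nat l * ennreal (?p \<omega>) + ?c * (ennreal (?p \<omega>) * ?r \<omega>)"
      using AE_cprob[OF F Y_y] AE_cprob[OF G' Y_y]
      by eventually_elim (intro kl_term_le_codeword_length; simp)
  qed
  also have "\<dots> = of_nat l * (\<integral>\<^sup>+\<omega>. ennreal (?p \<omega>) \<partial>M) + ?c * (\<integral>\<^sup>+\<omega>. ennreal (?p \<omega>) * ?r \<omega> \<partial>M)"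
    by (simp add: nn_integral_add nn_integral_cmult)
  also have "\<dots> \<le> of_nat l * emeasure M {\<omega>\<in>space M. Y \<omega> = y}
      + ?c * (ennreal ((1/2) ^ l) * indicator {s. prob {\<omega>\<in>space M. Y \<omega> = s} > 0} y)"
    by (intro add_mono mult_left_mono nn_integral_cprob_mult_ratio_le F G)
      (simp_all add: nn_integral_cprob F)
  finally show ?thesis .
qed

end

lemma measurable_hist:
  "(\<And>i. i \<in> I \<Longrightarrow> p i \<in> measurable M N) \<Longrightarrow> hist p I \<in> measurable M (PiM I (\<lambda>_. N))"
  unfolding hist_def by (rule measurable_restrict)

lemma (in prob_space) cond_mi_le_nn_integral_kl_term:
  fixes Y :: "'a \<Rightarrow> 'c::countable"
  assumes [measurable]: "X \<in> measurable M MX" "Z \<in> measurable M MZ"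
  shows "cond_mi M X MX Y Z MZ \<le> (\<integral>\<^sup>+y. \<integral>\<^sup>+\<omega>. e2ennreal (kl_term
      (cprob M (sigma_of M (\<lambda>\<omega>. (X \<omega>, Z \<omega>)) (MX \<Otimes>\<^sub>M MZ)) Y y \<omega>) (cprob M (sigma_of M Z MZ) Y y \<omega>))
    \<partial>M \<partial>count_space UNIV)"
proof -
  let ?F = "sigma_of M (\<lambda>\<omega>. (X \<omega>, Z \<omega>)) (MX \<Otimes>\<^sub>M MZ)" and ?G = "sigma_of M Z MZ"
  let ?K = "\<lambda>y \<omega>. e2ennreal (kl_term (cprob M ?F Y y \<omega>) (cprob M ?G Y y \<omega>))"
  have F: "subalgebra M ?F" and G: "subalgebra M ?G"
    by (rule subalgebra_sigma_of, measurable)+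
  have [measurable]: "?K y \<in> borel_measurable M" for y
    using measurable_from_subalg[OF F borel_measurable_cprob[of M ?F Y y]]
      measurable_from_subalg[OF G borel_measurable_cprob[of M ?G Y y]]
    by measurable
  have "cond_mi M X MX Y Z MZ \<le> (\<integral>\<^sup>+\<omega>. \<integral>\<^sup>+y. ?K y \<omega> \<partial>count_space UNIV \<partial>M)"
    unfolding cond_mi_def by (intro nn_integral_mono e2ennreal_disc_KL_le)
  also have "\<dots> = (\<integral>\<^sup>+y. \<integral>\<^sup>+\<omega>. ?K y \<omega> \<partial>M \<partial>count_space UNIV)"
    by (rule nn_integral_count_space_nn_integral) auto
  finally show ?thesis .
qed

lemma (in prob_space) cond_mi_le_expected_length:
  fixes Y :: "'a \<Rightarrow> bool list"
  assumes [measurable]: "X \<in> measurable M MX" "Z \<in> measurable M MZ" "Y \<in> measurable M (count_space UNIV)"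
    and pf: "prefix_free {s. prob {\<omega>\<in>space M. Y \<omega> = s} > 0}"
  shows "cond_mi M X MX Y Z MZ \<le> (\<integral>\<^sup>+\<omega>. of_nat (length (Y \<omega>)) \<partial>M)"
proof -
  let ?F = "sigma_of M (\<lambda>\<omega>. (X \<omega>, Z \<omega>)) (MX \<Otimes>\<^sub>M MZ)" and ?G = "sigma_of M Z MZ"
  let ?K = "\<lambda>y \<omega>. e2ennreal (kl_term (cprob M ?F Y y \<omega>) (cprob M ?G Y y \<omega>))"
  let ?\<pi> = "\<lambda>y. emeasure M {\<omega>\<in>space M. Y \<omega> = y}"
  let ?c = "ennreal (1 / ln 2)"
  let ?S = "{s. prob {\<omega>\<in>space M. Y \<omega> = s} > 0}"
  have F: "subalgebra M ?F"
    by (rule subalgebra_sigma_of) measurable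
  have G: "subalgebra ?F ?G"
    by (rule subalgebra_sigma_of_Pair_snd) measurable
  have mi_le: "cond_mi M X MX Y Z MZ \<le> (\<integral>\<^sup>+y. \<integral>\<^sup>+\<omega>. ?K y \<omega> \<partial>M \<partial>count_space UNIV)"
    by (rule cond_mi_le_nn_integral_kl_term) measurable
  have total: "(\<integral>\<^sup>+y. ?\<pi> y \<partial>count_space UNIV) = 1"
    using nn_integral_count_space_emeasure_eq[of Y M "\<lambda>_. 1"] by (simp add: emeasure_space_1)
  have "(\<integral>\<^sup>+y. \<integral>\<^sup>+\<omega>. ?K y \<omega> \<partial>M \<partial>count_space UNIV) + ?c
      = (\<integral>\<^sup>+y. (\<integral>\<^sup>+\<omega>. ?K y \<omega> \<partial>M) + ?c * ?\<pi> y \<partial>count_space UNIV)"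
    by (simp add: nn_integral_add nn_integral_cmult total)
  also have "\<dots> \<le> (\<integral>\<^sup>+y. of_nat (length y) * ?\<pi> y + ?c * (ennreal ((1/2) ^ length y) * indicator ?S y)
      \<partial>count_space UNIV)"
    by (intro nn_integral_mono nn_integral_kl_term_cprob_le F G) measurable
  also have "\<dots> = (\<integral>\<^sup>+\<omega>. of_nat (length (Y \<omega>)) \<partial>M)
      + ?c * (\<integral>\<^sup>+y. ennreal ((1/2) ^ length y) * indicator ?S y \<partial>count_space UNIV)"
    by (simp add: nn_integral_add nn_integral_cmult nn_integral_count_space_emeasure_eq)
  also have "\<dots> \<le> (\<integral>\<^sup>+\<omega>. of_nat (length (Y \<omega>)) \<partial>M) + ?c"
    using mult_left_mono[OF kraft_inequality[OF pf], of ?c] by (intro add_left_mono) simp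
  finally show ?thesis
    using mi_le by (simp add: ennreal_add_left_cancel_le add.commute order_trans)
qed

theorem theorem1:
  fixes M :: "'w measure"
    and A11 :: "real^'n^'n" and A12 :: "real^'m^'n" and A21 :: "real^'n^'m" and A22 :: "real^'m^'m"
    and B1 :: "real^'k^'n" and B2 :: "real^'k^'m"
    and W11 :: "real^'n^'n" and W22 :: "real^'m^'m"
    and x1 :: "nat \<Rightarrow> 'w \<Rightarrow> real^'n" and x2 :: "nat \<Rightarrow> 'w \<Rightarrow> real^'m"
    and w :: "nat \<Rightarrow> 'w \<Rightarrow> ((real^'n) \<times> (real^'m))"
    and u :: "nat \<Rightarrow> 'w \<Rightarrow> real^'k"
    and a :: "nat \<Rightarrow> 'w \<Rightarrow> bool list"
    and T :: nat
  defines "x \<equiv> (\<lambda>t \<omega>. (x1 t \<omega>, x2 t \<omega>))"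
  assumes prob: "prob_space M"
    and stab: "stabilizable (blockA A11 A12 A21 A22) (blockB B1 B2)"
    and W11_pd: "pos_def_mat W11" and W22_pd: "pos_def_mat W22"
    and meas_x1: "\<And>t. x1 t \<in> borel_measurable M"
    and meas_x2: "\<And>t. x2 t \<in> borel_measurable M"
    and meas_w: "\<And>t. w t \<in> borel_measurable M"
    and meas_u: "\<And>t. u t \<in> borel_measurable M"
    and meas_a: "\<And>t. a t \<in> measurable M (count_space UNIV)"
    and dyn: "\<And>t \<omega>. t \<ge> 1 \<Longrightarrow> \<omega> \<in> space M \<Longrightarrow>
       x (Suc t) \<omega> = blockA A11 A12 A21 A22 (x t \<omega>) + blockB B1 B2 (u t \<omega>) + w t \<omega>"
    and noise_gauss: "\<And>t. t \<ge> 1 \<Longrightarrow>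
       distributed M lborel (w t) (\<lambda>(z1, z2). ennreal (gauss_dens W11 z1 * gauss_dens W22 z2))"
    and noise_iid: "prob_space.indep_vars M (\<lambda>_. borel) w {1..}"
    and noise_indep: "\<And>t. t \<ge> 1 \<Longrightarrow>
       indep_rv M (w t) borel
         (\<lambda>\<omega>. (hist x {1..t} \<omega>, hist a {1..t} \<omega>, hist u {1..t} \<omega>))
         (PiM {1..t} (\<lambda>_. borel) \<Otimes>\<^sub>M PiM {1..t} (\<lambda>_. count_space UNIV) \<Otimes>\<^sub>M PiM {1..t} (\<lambda>_. borel))"
    and encoder: "\<And>t. t \<ge> 1 \<Longrightarrow>
       cond_indep M (a t) (count_space UNIV)
         (hist u {1..<t}) (PiM {1..<t} (\<lambda>_. borel))
         (\<lambda>\<omega>. (hist x {1..t} \<omega>, hist a {1..<t} \<omega>))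
         (PiM {1..t} (\<lambda>_. borel) \<Otimes>\<^sub>M PiM {1..<t} (\<lambda>_. count_space UNIV))"
    and controller: "\<And>t. t \<ge> 1 \<Longrightarrow>
       cond_indep M (u t) borel
         (hist x1 {1..t}) (PiM {1..t} (\<lambda>_. borel))
         (\<lambda>\<omega>. (hist a {1..t} \<omega>, hist x2 {1..t} \<omega>, hist u {1..<t} \<omega>))
         (PiM {1..t} (\<lambda>_. count_space UNIV) \<Otimes>\<^sub>M PiM {1..t} (\<lambda>_. borel) \<Otimes>\<^sub>M PiM {1..<t} (\<lambda>_. borel))"
    and prefix_free: "\<And>t. t \<ge> 1 \<Longrightarrow>
       prefix_free {s. measure M {\<omega>\<in>space M. a t \<omega> = s} > 0}"
    and T_pos: "T \<ge> 1"
  shows "(\<Sum>t\<in>{1..T}. \<integral>\<^sup>+ \<omega>. of_nat (length (a t \<omega>)) \<partial>M)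
           \<ge> dir_info_cc M x borel a x2 borel T"
proof -
  interpret prob_space M
    by (rule prob)
  have [measurable]: "x t \<in> borel_measurable M" for t
    unfolding x_def using meas_x1 meas_x2 by measurable
  have "cond_mi M (hist x {1..t}) (PiM {1..t} (\<lambda>_. borel)) (a t)
      (\<lambda>\<omega>. (hist a {1..<t} \<omega>, hist x2 {1..t} \<omega>))
      (PiM {1..<t} (\<lambda>_. count_space UNIV) \<Otimes>\<^sub>M PiM {1..t} (\<lambda>_. borel))
    \<le> (\<integral>\<^sup>+\<omega>. of_nat (length (a t \<omega>)) \<partial>M)" if "t \<in> {1..T}" for t
  proof (rule cond_mi_le_expected_length)
    show "hist x {1..t} \<in> measurable M (PiM {1..t} (\<lambda>_. borel))"
      by (rule measurable_hist) measurable
    show "(\<lambda>\<omega>. (hist a {1..<t} \<omega>, hist x2 {1..t} \<omega>))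
        \<in> measurable M (PiM {1..<t} (\<lambda>_. count_space UNIV) \<Otimes>\<^sub>M PiM {1..t} (\<lambda>_. borel))"
      by (intro measurable_Pair measurable_hist meas_a meas_x2)
  qed (use meas_a prefix_free that in auto)
  then show ?thesis
    unfolding dir_info_cc_def by (rule sum_mono)
qed

end
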